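(* Let $\psi:\mathbb{N}\to(0,\infty)$ satisfy: (I) there exists $c>0$ such that for all $n\ge1$ and all integers $k\in[n,2n]$, $\psi(k)=\psi(n)\{1+O((\log n)^{-c})\}$; (II) there exists $\epsilon>0$ such that for all $n\ge1$, $\psi(2n)=\psi(n)\Big\{1-\frac{\log 2}{2\log n}+O\big((\log n)^{-1-\epsilon}\big)\Big\}$. Set $\delta=\min\{c,\epsilon\}$. Then there exists $a>0$ such that $$\psi(n)=a(\log n)^{-1/2}\Big\{1+O\big((\log n)^{-\delta}\big)\Big\}.$$ *)

theory Defs
  imports Complex_Main
begin

end

(* With ln_scaled psi n = ln (psi n * sqrt (ln n)), hypothesis (II) makes the first-order terms
   cancel in ln_scaled psi (2 n) - ln_scaled psi n: the increment -ln 2 / (2 ln n) of ln psi is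
   offset by (1/2) ln (ln (2 n) / ln n), leaving O((ln n) powr (-1 - delta)). As
   ln (2^i m) = ln m + i ln 2, these increments are summable along each dyadic sequence 2^i m, so
   ln_scaled psi (2^j m) converges to a limit within O((ln m) powr (-delta)) of ln_scaled psi m.
   By (I), ln_scaled psi (2^j (m + 1)) - ln_scaled psi (2^j m) tends to 0, so the limit is one
   constant ln a for all m, and exponentiating gives the claim.
   (I) with k = 2 n is compatible with (II) only if c <= 1; hence delta <= 1, which is what
   absorbs the second-order error O((ln n) powr -2) of the cancellation. *)

theory Submission
  imports Defs
begin

lemma ln_power2_mult:
  assumes "m > 0"
  shows "ln (real (2 ^ i * m)) = ln (real m) + real i * ln 2"
  using assms by (simp add: ln_mult ln_realpow)

lemma two_le_power2_mult: "2 \<le> m \<Longrightarrow> 2 \<le> 2 ^ j * (m :: nat)"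
  by (metis le_trans mult_le_mono1 one_le_power one_le_numeral mult_1)

lemma filterlim_ln_real_sequentially: "filterlim (\<lambda>n. ln (real n)) at_top sequentially"
  by (rule filterlim_compose[OF ln_at_top filterlim_real_sequentially])

lemma filterlim_arith_progression_at_top:
  fixes x L :: real
  assumes "L > 0"
  shows "filterlim (\<lambda>i. x + real i * L) at_top sequentially"
  using assms by (intro filterlim_tendsto_add_at_top[OF tendsto_const]
      filterlim_at_top_mult_tendsto_pos[OF tendsto_const] filterlim_real_sequentially)

lemma uniform_bound_if_eventually:
  fixes f g :: "nat \<Rightarrow> real"
  assumes "eventually (\<lambda>n. f n \<le> K * g n) sequentially" and "\<And>n. n \<ge> 2 \<Longrightarrow> g n > 0"
  shows "\<exists>K'. \<forall>n\<ge>2. f n \<le> K' * g n"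
proof -
  obtain N where N: "\<And>n. n \<ge> N \<Longrightarrow> f n \<le> K * g n"
    using assms(1) by (auto simp: eventually_sequentially)
  define M where "M = Max (insert K ((\<lambda>n. f n / g n) ` {2..<N}))"
  have "f n \<le> M * g n" if "n \<ge> 2" for n
  proof (cases "n \<ge> N")
    case True
    then have "f n \<le> K * g n" by (rule N)
    also have "\<dots> \<le> M * g n"
      using assms(2)[OF that] unfolding M_def by (intro mult_right_mono Max_ge) auto
    finally show ?thesis .
  next
    case False
    then have "f n / g n \<le> M" unfolding M_def using that by (intro Max_ge) auto
    then show ?thesis using assms(2)[OF that] by (simp add: pos_divide_le_eq)
  qed
  then show ?thesis by blast
qed

lemma abs_exp_minus_one_le: "\<bar>exp t - 1\<bar> \<le> \<bar>t\<bar> * exp \<bar>t\<bar>" for t :: real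
proof (cases "t \<ge> 0")
  case True
  have "exp t * (1 - t) \<le> exp t * exp (- t)"
    using exp_ge_add_one_self[of "- t"] by (intro mult_left_mono) auto
  then show ?thesis using True by (simp add: exp_minus algebra_simps)
next
  case False
  have "1 + t \<le> exp t" "exp t \<le> 1" "1 \<le> exp \<bar>t\<bar>"
    using False by auto
  then show ?thesis using False by (smt (verit) mult_le_cancel_left1)
qed

lemma powr_neg_diff_ge:
  fixes y L d :: real
  assumes "y > 0" "L > 0" "d > 0"
  shows "d * L * (y + L) powr (-1 - d) \<le> y powr (-d) - (y + L) powr (-d)"
proof -
  have "\<And>x. y \<le> x \<Longrightarrow> x \<le> y + L \<Longrightarrow> ((\<lambda>z. z powr (-d)) has_real_derivative (-d) * x powr (-d - 1)) (at x)"
    using assms by (intro has_real_derivative_powr) auto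
  from MVT2[of y "y + L", OF _ this] assms obtain z where z: "y < z" "z < y + L"
    and mvt: "(y + L) powr (-d) - y powr (-d) = L * ((-d) * z powr (-d - 1))" by auto
  have "d * L * (y + L) powr (-1 - d) \<le> d * L * z powr (-1 - d)"
    using z assms by (intro mult_left_mono powr_mono2') auto
  also have "\<dots> = y powr (-d) - (y + L) powr (-d)"
  proof -
    have "-d - 1 = -1 - d" by simp
    then show ?thesis using mvt by (simp only:) (simp add: algebra_simps)
  qed
  finally show ?thesis .
qed

lemma powr_arith_progression_series:
  fixes x L d :: real
  assumes "x > 0" "L > 0" "d > 0"
  shows "summable (\<lambda>i. (x + real i * L) powr (-1 - d))"
    and "(\<Sum>i. (x + real i * L) powr (-1 - d)) \<le> x powr (-1 - d) + x powr (-d) / (d * L)"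
proof -
  define a where "a i = (x + real i * L) powr (-1 - d)" for i
  define T where "T i = (x + real i * L) powr (-d) / (d * L)" for i
  have "T \<longlonglongrightarrow> 0 / (d * L)"
    unfolding T_def using assms
    by (intro tendsto_divide tendsto_neg_powr filterlim_arith_progression_at_top) auto
  then have telescope: "(\<lambda>i. T i - T (Suc i)) sums T 0"
    using telescope_sums'[of T 0] by simp
  have a_Suc_le: "a (Suc i) \<le> T i - T (Suc i)" for i
    using powr_neg_diff_ge[of "x + real i * L" L d] assms add_pos_nonneg[of x "real i * L"]
    by (simp add: a_def T_def algebra_simps diff_divide_distrib pos_le_divide_eq)
  have summable_Suc: "summable (\<lambda>i. a (Suc i))"
    using a_Suc_le by (intro summable_comparison_test[OF _ sums_summable[OF telescope]])
      (auto simp: a_def)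
  then have "summable a" by (simp add: summable_Suc_iff)
  then show "summable (\<lambda>i. (x + real i * L) powr (-1 - d))" unfolding a_def[abs_def] .
  have "(\<Sum>i. a (Suc i)) \<le> T 0"
    using suminf_le[OF a_Suc_le summable_Suc sums_summable[OF telescope]] sums_unique[OF telescope]
    by simp
  then show "suminf a \<le> x powr (-1 - d) + x powr (-d) / (d * L)"
    using suminf_split_head[OF \<open>summable a\<close>] by (simp add: a_def T_def)
qed

lemma suminf_powr_arith_progression_le:
  fixes x L d :: real
  assumes "0 < L" "L \<le> x" "d > 0"
  shows "(\<Sum>i. (x + real i * L) powr (-1 - d)) \<le> (1 + 1 / d) / L * x powr (-d)"
proof -
  have "x > 0" using assms by linarith
  have "x powr (-1 - d) = x powr (-d - 1)" by (rule arg_cong[where f = "\<lambda>a. x powr a"]) simp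
  also have "\<dots> = x powr (-d) / x"
    using \<open>x > 0\<close> by (simp add: powr_diff)
  also have "\<dots> \<le> x powr (-d) / L"
    using assms by (intro divide_left_mono) auto
  finally have "x powr (-1 - d) + x powr (-d) / (d * L) \<le> (1 + 1 / d) / L * x powr (-d)"
    using assms by (simp add: field_simps)
  then show ?thesis
    using powr_arith_progression_series(2)[OF \<open>x > 0\<close> \<open>0 < L\<close> \<open>d > 0\<close>] by linarith
qed

lemma ln_doubling_ratio_bound:
  fixes l L C r :: real
  assumes "l \<ge> 1" "l \<ge> 2 * L" "l \<ge> 4 * \<bar>C\<bar>" "L > 0"
    and r: "\<bar>r - (1 - L / (2 * l))\<bar> \<le> \<bar>C\<bar> / l"
  shows "\<bar>ln r + ln (1 + L / l) / 2\<bar> \<le> \<bar>r - (1 - L / (2 * l))\<bar> + (2 * L\<^sup>2 + 4 * C\<^sup>2) / l\<^sup>2"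
proof -
  define u where "u = r - 1"
  define v where "v = L / l"
  have "l > 0" using assms by simp
  have "0 \<le> L / (2 * l)" using \<open>l > 0\<close> \<open>L > 0\<close> by simp
  then have u_le: "\<bar>u\<bar> \<le> L / (2 * l) + \<bar>C\<bar> / l"
    using r unfolding u_def by linarith
  moreover have "L / (2 * l) + \<bar>C\<bar> / l \<le> 1/2"
    using assms \<open>l > 0\<close> by (simp add: field_simps)
  ultimately have "\<bar>u\<bar> \<le> 1/2" by linarith
  have "\<bar>v\<bar> \<le> 1/2" using assms \<open>l > 0\<close> unfolding v_def by (simp add: field_simps)
  have "u\<^sup>2 \<le> (L / (2 * l) + \<bar>C\<bar> / l)\<^sup>2"
    using u_le by (metis abs_ge_zero power2_abs power_mono)
  also have "\<dots> \<le> 2 * ((L / (2 * l))\<^sup>2 + (\<bar>C\<bar> / l)\<^sup>2)"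
    using sum_squares_bound[of "L / (2 * l)" "\<bar>C\<bar> / l"] by (simp add: power2_sum)
  also have "\<dots> = ((2 * L\<^sup>2 + 4 * C\<^sup>2) / l\<^sup>2 - v\<^sup>2) / 2"
    unfolding v_def by (simp add: field_simps add_divide_distrib)
  finally have "2 * u\<^sup>2 + v\<^sup>2 \<le> (2 * L\<^sup>2 + 4 * C\<^sup>2) / l\<^sup>2" by simp
  moreover have "\<bar>ln (1 + u) + ln (1 + v) / 2 - (u + v / 2)\<bar> \<le> 2 * u\<^sup>2 + v\<^sup>2"
    using abs_ln_one_plus_x_minus_x_bound[OF \<open>\<bar>u\<bar> \<le> 1/2\<close>]
      abs_ln_one_plus_x_minus_x_bound[OF \<open>\<bar>v\<bar> \<le> 1/2\<close>] by linarith
  moreover have "u + v / 2 = r - (1 - L / (2 * l))" unfolding u_def v_def by simp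
  ultimately show ?thesis unfolding u_def v_def by simp
qed

definition ln_scaled :: "(nat \<Rightarrow> real) \<Rightarrow> nat \<Rightarrow> real" where
  "ln_scaled \<psi> n = ln (\<psi> n) + ln (ln (real n)) / 2"

lemma ln_scaled_diff:
  assumes pos: "\<And>n. \<psi> n > 0" and "2 \<le> n" "n \<le> k"
  shows "ln_scaled \<psi> k - ln_scaled \<psi> n = ln (\<psi> k / \<psi> n) + ln (ln (real k) / ln (real n)) / 2"
proof -
  have "ln (real n) > 0" "ln (real k) > 0" using assms(2,3) by auto
  then show ?thesis using pos[of n] pos[of k] by (simp add: ln_scaled_def ln_div field_simps)
qed

lemma exponent_le_one_if_doubling_asymptotics:
  fixes \<rho> :: "nat \<Rightarrow> real"
  assumes I: "\<forall>n\<ge>2. \<bar>\<rho> n - 1\<bar> \<le> C1 * ln (real n) powr (-c)"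
    and II: "\<forall>n\<ge>2. \<bar>\<rho> n - (1 - ln 2 / (2 * ln (real n)))\<bar> \<le> C2 * ln (real n) powr (-1 - \<epsilon>)"
    and "\<epsilon> > 0"
  shows "c \<le> 1"
proof (rule ccontr)
  assume "\<not> c \<le> 1"
  define f where "f n = C1 * ln (real n) powr (1 - c) + C2 * ln (real n) powr (-\<epsilon>)" for n
  have "f \<longlonglongrightarrow> C1 * 0 + C2 * 0"
    unfolding f_def using \<open>\<not> c \<le> 1\<close> \<open>\<epsilon> > 0\<close>
    by (intro tendsto_intros tendsto_neg_powr filterlim_ln_real_sequentially) auto
  then have "eventually (\<lambda>n. f n < ln 2 / 2) sequentially"
    by (intro order_tendstoD) auto
  moreover have "eventually (\<lambda>n. ln 2 / 2 \<le> f n) sequentially"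
    using eventually_ge_at_top[of 2]
  proof eventually_elim
    case (elim n)
    define l where "l = ln (real n)"
    have "l > 0" using elim unfolding l_def by simp
    have "ln 2 / (2 * l) \<le> C1 * l powr (-c) + C2 * l powr (-1 - \<epsilon>)"
      using I II elim unfolding l_def by fastforce
    then have "l * (ln 2 / (2 * l)) \<le> l * (C1 * l powr (-c) + C2 * l powr (-1 - \<epsilon>))"
      using \<open>l > 0\<close> by (intro mult_left_mono) auto
    then show ?case
      using \<open>l > 0\<close> powr_mult_base[of l "-c"] powr_mult_base[of l "-1 - \<epsilon>"]
      unfolding f_def l_def[symmetric] by (simp add: algebra_simps)
  qed
  ultimately have "eventually (\<lambda>n. False) sequentially"
    by eventually_elim simp
  then show False by simp
qed

lemma ln_scaled_doubling_le:
  fixes \<psi> :: "nat \<Rightarrow> real"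
  assumes pos: "\<And>n. \<psi> n > 0" and "n \<ge> 2"
    and l: "ln (real n) \<ge> max 1 (max (2 * ln 2) (4 * \<bar>C\<bar>))"
    and II: "\<bar>\<psi> (2 * n) / \<psi> n - (1 - ln 2 / (2 * ln (real n)))\<bar> \<le> C * ln (real n) powr (-1 - \<epsilon>)"
    and \<delta>: "0 \<le> \<delta>" "\<delta> \<le> \<epsilon>" "\<delta> \<le> 1"
  shows "\<bar>ln_scaled \<psi> (2 * n) - ln_scaled \<psi> n\<bar>
           \<le> (\<bar>C\<bar> + (2 * (ln 2)\<^sup>2 + 4 * C\<^sup>2)) * ln (real n) powr (-1 - \<delta>)"
proof -
  define L :: real where "L = ln 2"
  define M where "M = 2 * L\<^sup>2 + 4 * C\<^sup>2"
  define l where "l = ln (real n)"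
  define r where "r = \<psi> (2 * n) / \<psi> n"
  have l_ge: "l \<ge> 1" "l \<ge> 2 * L" "l \<ge> 4 * \<bar>C\<bar>" using l unfolding l_def L_def by auto
  have "l powr (-1 - \<epsilon>) \<le> l powr (-1)" "l powr (-1 - \<epsilon>) \<le> l powr (-1 - \<delta>)"
    "l powr (-2) \<le> l powr (-1 - \<delta>)"
    by (rule powr_mono; use l_ge \<delta> in linarith)+
  moreover have "l powr (-1) = 1 / l" "l powr (-2) = 1 / l\<^sup>2"
    using l_ge by (simp_all add: powr_minus_divide)
  ultimately have powr_le: "l powr (-1 - \<epsilon>) \<le> 1 / l" "l powr (-1 - \<epsilon>) \<le> l powr (-1 - \<delta>)"
    "1 / l\<^sup>2 \<le> l powr (-1 - \<delta>)"
    by simp_all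
  have "\<bar>r - (1 - L / (2 * l))\<bar> \<le> C * l powr (-1 - \<epsilon>)"
    using II unfolding r_def l_def L_def .
  also have "\<dots> \<le> \<bar>C\<bar> * l powr (-1 - \<epsilon>)" by (intro mult_right_mono) auto
  finally have r_err: "\<bar>r - (1 - L / (2 * l))\<bar> \<le> \<bar>C\<bar> * l powr (-1 - \<epsilon>)" .
  have "ln (real (2 * n)) / l = 1 + L / l"
    using l_ge \<open>n \<ge> 2\<close> unfolding l_def L_def by (simp add: ln_mult field_simps)
  then have "ln_scaled \<psi> (2 * n) - ln_scaled \<psi> n = ln r + ln (1 + L / l) / 2"
    using ln_scaled_diff[OF pos, of n "2 * n"] \<open>n \<ge> 2\<close> unfolding r_def l_def by simp
  also have "\<bar>\<dots>\<bar> \<le> \<bar>r - (1 - L / (2 * l))\<bar> + M / l\<^sup>2"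
    unfolding M_def
  proof (rule ln_doubling_ratio_bound[OF l_ge])
    show "L > 0" unfolding L_def by simp
    have "\<bar>C\<bar> * l powr (-1 - \<epsilon>) \<le> \<bar>C\<bar> * (1 / l)"
      using powr_le(1) by (intro mult_left_mono) auto
    then show "\<bar>r - (1 - L / (2 * l))\<bar> \<le> \<bar>C\<bar> / l" using r_err by simp
  qed
  also have "\<dots> \<le> \<bar>C\<bar> * l powr (-1 - \<delta>) + M * l powr (-1 - \<delta>)"
  proof -
    have "\<bar>C\<bar> * l powr (-1 - \<epsilon>) \<le> \<bar>C\<bar> * l powr (-1 - \<delta>)"
      using powr_le(2) by (intro mult_left_mono) auto
    moreover have "M * (1 / l\<^sup>2) \<le> M * l powr (-1 - \<delta>)"
      using powr_le(3) unfolding M_def by (intro mult_left_mono) auto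
    ultimately show ?thesis using r_err by simp
  qed
  finally show ?thesis unfolding l_def M_def L_def by (simp only: distrib_right)
qed

lemma ln_scaled_doubling_bound:
  fixes \<psi> :: "nat \<Rightarrow> real"
  assumes pos: "\<And>n. \<psi> n > 0"
    and II: "\<forall>n\<ge>2. \<bar>\<psi> (2 * n) / \<psi> n - (1 - ln 2 / (2 * ln (real n)))\<bar>
               \<le> C * ln (real n) powr (-1 - \<epsilon>)"
    and \<delta>: "0 \<le> \<delta>" "\<delta> \<le> \<epsilon>" "\<delta> \<le> 1"
  shows "\<exists>K. \<forall>n\<ge>2. \<bar>ln_scaled \<psi> (2 * n) - ln_scaled \<psi> n\<bar> \<le> K * ln (real n) powr (-1 - \<delta>)"
proof (rule uniform_bound_if_eventually)
  have "eventually (\<lambda>n. ln (real n) \<ge> max 1 (max (2 * ln 2) (4 * \<bar>C\<bar>))) sequentially"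
    using filterlim_ln_real_sequentially unfolding filterlim_at_top by blast
  with eventually_ge_at_top[of 2]
  show "eventually (\<lambda>n. \<bar>ln_scaled \<psi> (2 * n) - ln_scaled \<psi> n\<bar>
          \<le> (\<bar>C\<bar> + (2 * (ln 2)\<^sup>2 + 4 * C\<^sup>2)) * ln (real n) powr (-1 - \<delta>)) sequentially"
    by eventually_elim (use II in \<open>simp add: ln_scaled_doubling_le[OF pos _ _ _ \<delta>]\<close>)
qed simp

lemma dyadic_limit_rate:
  fixes h :: "nat \<Rightarrow> real"
  assumes incr: "\<forall>n\<ge>2. \<bar>h (2 * n) - h n\<bar> \<le> K * ln (real n) powr (-1 - \<delta>)"
    and "\<delta> > 0" and "m \<ge> 2"
  shows "convergent (\<lambda>j. h (2 ^ j * m))"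
    and "\<bar>lim (\<lambda>j. h (2 ^ j * m)) - h m\<bar> \<le> K * (1 + 1 / \<delta>) / ln 2 * ln (real m) powr (-\<delta>)"
proof -
  define L :: real where "L = ln 2"
  define x where "x = ln (real m)"
  define d where "d i = h (2 ^ Suc i * m) - h (2 ^ i * m)" for i
  have "L > 0" unfolding L_def by simp
  have "x \<ge> L" unfolding x_def L_def using \<open>m \<ge> 2\<close> by simp
  then have "x > 0" using \<open>L > 0\<close> by linarith
  have "0 \<le> K * L powr (-1 - \<delta>)"
    using incr[rule_format, of 2] unfolding L_def by (simp add: order_trans[OF abs_ge_zero])
  then have "K \<ge> 0" using \<open>L > 0\<close> by (simp add: zero_le_mult_iff)
  have d_le: "\<bar>d i\<bar> \<le> K * (x + real i * L) powr (-1 - \<delta>)" for i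
  proof -
    have "2 ^ i * m \<ge> 2" using \<open>m \<ge> 2\<close> by (rule two_le_power2_mult)
    then have "\<bar>d i\<bar> \<le> K * ln (real (2 ^ i * m)) powr (-1 - \<delta>)"
      using incr unfolding d_def power_Suc mult.assoc by blast
    also have "ln (real (2 ^ i * m)) = x + real i * L"
      unfolding x_def L_def using \<open>m \<ge> 2\<close> by (intro ln_power2_mult) simp
    finally show ?thesis .
  qed
  note summable_powr = powr_arith_progression_series(1)[OF \<open>x > 0\<close> \<open>L > 0\<close> \<open>\<delta> > 0\<close>]
  have summable_abs: "summable (\<lambda>i. \<bar>d i\<bar>)"
    using d_le by (intro summable_rabs_comparison_test[OF _ summable_mult[OF summable_powr]]) auto
  have "(\<lambda>j. h m + (\<Sum>i<j. d i)) \<longlonglongrightarrow> h m + suminf d"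
    using summable_abs by (intro tendsto_add tendsto_const summable_LIMSEQ) (simp add: summable_rabs_cancel)
  moreover have "h (2 ^ j * m) = h m + (\<Sum>i<j. d i)" for j
    by (induction j) (simp_all add: d_def)
  ultimately have lim: "(\<lambda>j. h (2 ^ j * m)) \<longlonglongrightarrow> h m + suminf d" by simp
  then show "convergent (\<lambda>j. h (2 ^ j * m))" by (rule convergentI)
  have "\<bar>suminf d\<bar> \<le> (\<Sum>i. \<bar>d i\<bar>)" using summable_abs by (rule summable_rabs)
  also have "\<dots> \<le> (\<Sum>i. K * (x + real i * L) powr (-1 - \<delta>))"
    using d_le summable_abs summable_mult[OF summable_powr] by (rule suminf_le)
  also have "\<dots> = K * (\<Sum>i. (x + real i * L) powr (-1 - \<delta>))"
    using summable_powr by (rule suminf_mult)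
  also have "\<dots> \<le> K * ((1 + 1 / \<delta>) / L * x powr (-\<delta>))"
    using suminf_powr_arith_progression_le[OF \<open>L > 0\<close> \<open>x \<ge> L\<close> \<open>\<delta> > 0\<close>] \<open>K \<ge> 0\<close>
    by (rule mult_left_mono)
  finally show "\<bar>lim (\<lambda>j. h (2 ^ j * m)) - h m\<bar> \<le> K * (1 + 1 / \<delta>) / ln 2 * ln (real m) powr (-\<delta>)"
    using limI[OF lim] unfolding x_def L_def by (simp add: field_simps)
qed

lemma dyadic_limits_eq:
  fixes h :: "nat \<Rightarrow> real"
  assumes conv: "\<And>n. n \<ge> 2 \<Longrightarrow> convergent (\<lambda>j. h (2 ^ j * n))"
    and shift: "\<And>n. n \<ge> 2 \<Longrightarrow> (\<lambda>j. h (2 ^ j * Suc n) - h (2 ^ j * n)) \<longlonglongrightarrow> 0"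
    and "n \<ge> 2"
  shows "lim (\<lambda>j. h (2 ^ j * n)) = lim (\<lambda>j. h (2 ^ j * 2))"
  using \<open>n \<ge> 2\<close>
proof (induction n rule: nat_induct_at_least)
  case (Suc n)
  have "(\<lambda>j. h (2 ^ j * Suc n) - h (2 ^ j * n))
          \<longlonglongrightarrow> lim (\<lambda>j. h (2 ^ j * Suc n)) - lim (\<lambda>j. h (2 ^ j * n))"
    using conv[of n] conv[of "Suc n"] Suc.hyps
    by (intro tendsto_diff) (simp_all add: convergent_LIMSEQ_iff)
  with shift[OF Suc.hyps] have "lim (\<lambda>j. h (2 ^ j * Suc n)) = lim (\<lambda>j. h (2 ^ j * n))"
    using LIMSEQ_unique by fastforce
  with Suc.IH show ?case by simp
qed simp

lemma filterlim_ln_dyadic_at_top: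
  assumes "n > 0"
  shows "filterlim (\<lambda>j. ln (real (2 ^ j * n))) at_top sequentially"
  unfolding ln_power2_mult[OF assms] by (intro filterlim_arith_progression_at_top) simp

lemma ln_dyadic_ratio_tendsto_one:
  assumes "m > 0" "n \<ge> 2"
  shows "(\<lambda>j. ln (real (2 ^ j * m)) / ln (real (2 ^ j * n))) \<longlonglongrightarrow> 1"
proof (rule LIM_zero_cancel)
  have "(\<lambda>j. (ln (real m) - ln (real n)) / ln (real (2 ^ j * n))) \<longlonglongrightarrow> 0"
    using filterlim_ln_dyadic_at_top[of n] \<open>n \<ge> 2\<close>
    by (intro tendsto_divide_0[OF tendsto_const] filterlim_at_top_imp_at_infinity) auto
  moreover have "ln (real (2 ^ j * m)) / ln (real (2 ^ j * n)) - 1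
      = (ln (real m) - ln (real n)) / ln (real (2 ^ j * n))" for j
  proof -
    have "n > 0" "ln (real n) > 0" using \<open>n \<ge> 2\<close> by auto
    then have "ln (real n) + real j * ln 2 > 0" by (simp add: add_pos_nonneg)
    then show ?thesis
      unfolding ln_power2_mult[OF \<open>m > 0\<close>] ln_power2_mult[OF \<open>n > 0\<close>] by (simp add: field_simps)
  qed
  ultimately show "(\<lambda>j. ln (real (2 ^ j * m)) / ln (real (2 ^ j * n)) - 1) \<longlonglongrightarrow> 0" by simp
qed

lemma ln_scaled_dyadic_shift_tendsto_zero:
  fixes \<psi> :: "nat \<Rightarrow> real"
  assumes pos: "\<And>n. \<psi> n > 0" and "c > 0"
    and I: "\<forall>n\<ge>2. \<forall>k. n \<le> k \<and> k \<le> 2 * n \<longrightarrow> \<bar>\<psi> k / \<psi> n - 1\<bar> \<le> C * ln (real n) powr (-c)"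
    and "n \<ge> 2"
  shows "(\<lambda>j. ln_scaled \<psi> (2 ^ j * Suc n) - ln_scaled \<psi> (2 ^ j * n)) \<longlonglongrightarrow> 0"
proof -
  have n_j: "2 \<le> 2 ^ j * n" "2 ^ j * n \<le> 2 ^ j * Suc n" "2 ^ j * Suc n \<le> 2 * (2 ^ j * n)" for j
    using \<open>n \<ge> 2\<close> by (simp_all add: two_le_power2_mult)
  have "(\<lambda>j. C * ln (real (2 ^ j * n)) powr (-c)) \<longlonglongrightarrow> C * 0"
    using \<open>c > 0\<close> \<open>n \<ge> 2\<close> filterlim_ln_dyadic_at_top[of n]
    by (intro tendsto_intros tendsto_neg_powr) auto
  then have bound_lim: "(\<lambda>j. C * ln (real (2 ^ j * n)) powr (-c)) \<longlonglongrightarrow> 0" by simp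
  have ratio_le: "\<bar>\<psi> (2 ^ j * Suc n) / \<psi> (2 ^ j * n) - 1\<bar> \<le> \<bar>C * ln (real (2 ^ j * n)) powr (-c)\<bar> * 1" for j
  proof -
    have "\<bar>\<psi> (2 ^ j * Suc n) / \<psi> (2 ^ j * n) - 1\<bar> \<le> C * ln (real (2 ^ j * n)) powr (-c)"
      using I n_j[of j] by blast
    then show ?thesis by linarith
  qed
  have "(\<lambda>j. \<psi> (2 ^ j * Suc n) / \<psi> (2 ^ j * n) - 1) \<longlonglongrightarrow> 0"
    by (rule tendsto_0_le[OF bound_lim, where K = 1], intro always_eventually allI)
      (unfold real_norm_def, rule ratio_le)
  then have "(\<lambda>j. \<psi> (2 ^ j * Suc n) / \<psi> (2 ^ j * n)) \<longlonglongrightarrow> 1"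
    by (rule LIM_zero_cancel)
  then have "(\<lambda>j. ln (\<psi> (2 ^ j * Suc n) / \<psi> (2 ^ j * n))
      + ln (ln (real (2 ^ j * Suc n)) / ln (real (2 ^ j * n))) / 2) \<longlonglongrightarrow> ln 1 + ln 1 / 2"
    using ln_dyadic_ratio_tendsto_one[of "Suc n" n] \<open>n \<ge> 2\<close> by (intro tendsto_intros) auto
  then show ?thesis
    using ln_scaled_diff[OF pos n_j(1,2)] by simp
qed

lemma asymptotics_from_ln_scaled_rate:
  fixes \<psi> :: "nat \<Rightarrow> real"
  assumes pos: "\<And>n. \<psi> n > 0" and "\<delta> \<ge> 0"
    and rate: "\<forall>n\<ge>2. \<bar>ln_scaled \<psi> n - A\<bar> \<le> K * ln (real n) powr (-\<delta>)"
  shows "\<exists>C. \<forall>n\<ge>2. \<bar>\<psi> n / (exp A * ln (real n) powr (-1/2)) - 1\<bar> \<le> C * ln (real n) powr (-\<delta>)"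
proof -
  define B where "B = \<bar>K\<bar> * ln 2 powr (-\<delta>)"
  have "\<bar>\<psi> n / (exp A * ln (real n) powr (-1/2)) - 1\<bar> \<le> (\<bar>K\<bar> * exp B) * ln (real n) powr (-\<delta>)"
    if "n \<ge> 2" for n
  proof -
    define l where "l = ln (real n)"
    define t where "t = ln_scaled \<psi> n - A"
    have "l \<ge> ln 2" "l > 0" unfolding l_def using \<open>n \<ge> 2\<close> by auto
    have "exp (ln_scaled \<psi> n) = \<psi> n * l powr (1/2)"
      using pos[of n] \<open>l > 0\<close> unfolding ln_scaled_def l_def by (simp add: exp_add powr_def)
    then have ratio: "\<psi> n / (exp A * l powr (-1/2)) = exp t"
      using \<open>l > 0\<close> unfolding t_def by (simp add: exp_diff powr_minus_divide)
    have "\<bar>t\<bar> \<le> \<bar>K\<bar> * l powr (-\<delta>)"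
      using rate \<open>n \<ge> 2\<close> unfolding t_def l_def by (meson abs_ge_self mult_right_mono order_trans powr_ge_zero)
    moreover have "\<bar>K\<bar> * l powr (-\<delta>) \<le> B"
      unfolding B_def using \<open>l \<ge> ln 2\<close> \<open>\<delta> \<ge> 0\<close> by (intro mult_left_mono powr_mono2') auto
    ultimately have "\<bar>exp t - 1\<bar> \<le> (\<bar>K\<bar> * l powr (-\<delta>)) * exp B"
      using abs_exp_minus_one_le[of t] by (meson abs_ge_zero exp_gt_zero exp_le_cancel_iff mult_mono order_trans less_imp_le)
    then show ?thesis unfolding ratio[unfolded l_def] l_def by (simp add: algebra_simps)
  qed
  then show ?thesis by blast
qed

theorem lemma3p1:
  fixes \<psi> :: "nat \<Rightarrow> real" and c \<epsilon> :: real
  assumes pos: "\<And>n. \<psi> n > 0"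
    and c_pos: "c > 0"
    and I: "\<exists>C. \<forall>n\<ge>2. \<forall>k. n \<le> k \<and> k \<le> 2 * n \<longrightarrow>
              \<bar>\<psi> k / \<psi> n - 1\<bar> \<le> C * ln (real n) powr (- c)"
    and eps_pos: "\<epsilon> > 0"
    and II: "\<exists>C. \<forall>n\<ge>2.
              \<bar>\<psi> (2 * n) / \<psi> n - (1 - ln 2 / (2 * ln (real n)))\<bar>
                \<le> C * ln (real n) powr (- 1 - \<epsilon>)"
  shows "\<exists>a > 0. \<exists>C. \<forall>n\<ge>2.
           \<bar>\<psi> n / (a * ln (real n) powr (- 1 / 2)) - 1\<bar>
             \<le> C * ln (real n) powr (- min c \<epsilon>)"
proof -
  obtain C1 where C1: "\<forall>n\<ge>2. \<forall>k. n \<le> k \<and> k \<le> 2 * n \<longrightarrow>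
      \<bar>\<psi> k / \<psi> n - 1\<bar> \<le> C1 * ln (real n) powr (-c)"
    using I by auto
  obtain C2 where C2: "\<forall>n\<ge>2. \<bar>\<psi> (2 * n) / \<psi> n - (1 - ln 2 / (2 * ln (real n)))\<bar>
      \<le> C2 * ln (real n) powr (-1 - \<epsilon>)"
    using II by auto
  define \<delta> where "\<delta> = min c \<epsilon>"
  have "\<delta> > 0" unfolding \<delta>_def using c_pos eps_pos by simp
  have "c \<le> 1"
    using C1 C2 eps_pos by (intro exponent_le_one_if_doubling_asymptotics[of "\<lambda>n. \<psi> (2 * n) / \<psi> n" C1]) auto
  then have "\<delta> \<le> 1" "\<delta> \<le> \<epsilon>" unfolding \<delta>_def by auto
  then obtain K where K: "\<forall>n\<ge>2. \<bar>ln_scaled \<psi> (2 * n) - ln_scaled \<psi> n\<bar> \<le> K * ln (real n) powr (-1 - \<delta>)"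
    using ln_scaled_doubling_bound[OF pos C2, of \<delta>] \<open>\<delta> > 0\<close> by auto
  define A where "A = lim (\<lambda>j. ln_scaled \<psi> (2 ^ j * 2))"
  have "lim (\<lambda>j. ln_scaled \<psi> (2 ^ j * n)) = A" if "n \<ge> 2" for n
    unfolding A_def using that
    by (intro dyadic_limits_eq dyadic_limit_rate(1)[OF K \<open>\<delta> > 0\<close>]
        ln_scaled_dyadic_shift_tendsto_zero[OF pos c_pos C1])
  then have "\<forall>n\<ge>2. \<bar>ln_scaled \<psi> n - A\<bar> \<le> K * (1 + 1 / \<delta>) / ln 2 * ln (real n) powr (-\<delta>)"
    using dyadic_limit_rate(2)[OF K \<open>\<delta> > 0\<close>] by (metis abs_minus_commute)
  then obtain C where "\<forall>n\<ge>2. \<bar>\<psi> n / (exp A * ln (real n) powr (-1/2)) - 1\<bar> \<le> C * ln (real n) powr (-\<delta>)"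
    using asymptotics_from_ln_scaled_rate[of \<psi> \<delta>, OF pos less_imp_le[OF \<open>\<delta> > 0\<close>]] by blast
  then show ?thesis unfolding \<delta>_def using exp_gt_zero by blast
qed

end
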